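(* Let $n\ge m\ge1$. Then for all Banach spaces $X,Y$ and all bounded linear operators $T:X\to Y$, $$\tau(T|\mathcal H(\mathbb D_{m+1}^{n+1}))\le\tau(T|\mathcal H(\mathbb D_m^n)).$$
   Context: Dyadic intervals: $\Delta_k^{(j)}:=[\frac{j-1}{2^k},\frac{j}{2^k})$. Haar functions: for $k\ge1$, integer $j$, $\chi_k^{(j)}(t)=+2^{(k-1)/2}$ on $\Delta_k^{(2j-1)}$, $-2^{(k-1)/2}$ on $\Delta_k^{(2j)}$, $0$ otherwise, $t\in[0,1)$. $\mathbb D_m^n:=\{(k,j):k=m,\dots,n;\ j=1,\dots,2^{k-1}\}$. For a finite set $\mathbb F$ of such indices and bounded linear $T:X\to Y$, $\tau(T|\mathcal H(\mathbb F))$ is the least $c\ge0$ such that $\|\sum_{(k,j)\in\mathbb F}Tx_k^{(j)}\chi_k^{(j)}|L_2\|\le c(\sum_{(k,j)\in\mathbb F}\|x_k^{(j)}\|^2)^{1/2}$ for all $x_k^{(j)}\in X$, where $\|\cdot|L_2\|$ is the Bochner $L_2([0,1),Y)$ norm. *)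

theory Defs
  imports "HOL-Analysis.Analysis"
begin

definition dyadic_interval :: "nat \<Rightarrow> int \<Rightarrow> real set" where
  "dyadic_interval k j = {(real_of_int j - 1) / 2 ^ k ..< real_of_int j / 2 ^ k}"

definition haar :: "nat \<Rightarrow> int \<Rightarrow> real \<Rightarrow> real" where
  "haar k j t =
     (if t \<in> {0..<1} \<and> t \<in> dyadic_interval k (2 * j - 1) then 2 powr ((real k - 1) / 2)
      else if t \<in> {0..<1} \<and> t \<in> dyadic_interval k (2 * j) then - (2 powr ((real k - 1) / 2))
      else 0)"

definition dyadic_index :: "nat \<Rightarrow> nat \<Rightarrow> (nat \<times> int) set" where
  "dyadic_index m n = {(k, j). m \<le> k \<and> k \<le> n \<and> 1 \<le> j \<and> j \<le> 2 ^ (k - 1)}"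

definition L2_norm01 :: "(real \<Rightarrow> 'b::real_normed_vector) \<Rightarrow> real" where
  "L2_norm01 f = sqrt (LINT t : {0..<1} | lborel. (norm (f t))\<^sup>2)"

definition haar_tau :: "('a::real_normed_vector \<Rightarrow> 'b::real_normed_vector) \<Rightarrow> (nat \<times> int) set \<Rightarrow> real" where
  "haar_tau T F = Inf {c. 0 \<le> c \<and>
     (\<forall>x :: nat \<times> int \<Rightarrow> 'a.
        L2_norm01 (\<lambda>t. \<Sum>(k, j)\<in>F. haar k j t *\<^sub>R T (x (k, j)))
          \<le> c * sqrt (\<Sum>(k, j)\<in>F. (norm (x (k, j)))\<^sup>2))}"

end

theory Submission
  imports Defs
begin

text \<open>
  A Haar function of level k + 1 is sqrt 2 times a Haar function of level k, compressed onto
  [0, 1/2) or onto [1/2, 1). Hence a Haar polynomial f over D(m+1, n+1) has the form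
  f t = sqrt 2 (g1 (2t) + g2 (2t - 1)), where g1 and g2 are Haar polynomials over D(m, n) whose
  coefficients are the two halves of those of f. The two summands have disjoint supports, so
  |f|^2 = |g1|^2 + |g2|^2 in L2, and the l2 norm of the coefficients splits in the same way.
  Therefore every constant admissible for D(m, n) is admissible for D(m+1, n+1).
\<close>

lemma powr_half_Suc: "(2::real) powr ((real (Suc k) - 1) / 2) = sqrt 2 * 2 powr ((real k - 1) / 2)"
proof -
  have "(real (Suc k) - 1) / 2 = 1/2 + (real k - 1) / 2" by (simp add: field_simps)
  then show ?thesis by (metis powr_add powr_half_sqrt zero_le_numeral)
qed

lemma mem_dyadic_interval_iff:
  "t \<in> dyadic_interval k j \<longleftrightarrow> real_of_int j - 1 \<le> 2 ^ k * t \<and> 2 ^ k * t < real_of_int j"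
  by (simp add: dyadic_interval_def field_simps)

lemma haar_Suc_left:
  assumes "1 \<le> k" "j \<le> 2 ^ (k - 1)"
  shows "haar (Suc k) j t = sqrt 2 * haar k j (2 * t)"
proof -
  obtain i where k: "k = Suc i" using assms(1) by (cases k) auto
  define p :: real where "p = 2 ^ i"
  have "p > 0" "real_of_int j \<le> p"
    using assms(2) by (simp_all add: k p_def flip: of_int_le_iff)
  moreover obtain w where "t = w / p" using \<open>p > 0\<close> by (metis nonzero_eq_divide_eq less_irrefl)
  ultimately show ?thesis
    unfolding haar_def mem_dyadic_interval_iff powr_half_Suc k power_Suc p_def[symmetric] \<open>t = w / p\<close>
    by (auto simp: field_simps)
qed

lemma haar_Suc_right:
  assumes "1 \<le> k" "1 \<le> j"
  shows "haar (Suc k) (j + 2 ^ (k - 1)) t = sqrt 2 * haar k j (2 * t - 1)"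
proof -
  obtain i where k: "k = Suc i" using assms(1) by (cases k) auto
  define p :: real where "p = 2 ^ i"
  have "p > 0" by (simp add: p_def)
  moreover obtain w where "t = w / p" using \<open>p > 0\<close> by (metis nonzero_eq_divide_eq less_irrefl)
  ultimately show ?thesis
    unfolding haar_def mem_dyadic_interval_iff powr_half_Suc k power_Suc p_def[symmetric] \<open>t = w / p\<close>
    using assms(2) by (simp add: p_def[symmetric] algebra_simps) (auto simp: field_simps)
qed

lemma dyadic_index_eq_Sigma: "dyadic_index m n = (SIGMA k:{m..n}. {1..2 ^ (k - 1)})"
  by (auto simp: dyadic_index_def)

lemma finite_dyadic_index [simp]: "finite (dyadic_index m n)"
  by (simp add: dyadic_index_eq_Sigma)

lemma dyadic_index_Suc_eq:
  assumes "1 \<le> m"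
  shows "dyadic_index (Suc m) (Suc n) =
    (\<lambda>(k, j). (Suc k, j)) ` dyadic_index m n \<union>
    (\<lambda>(k, j). (Suc k, j + 2 ^ (k - 1))) ` dyadic_index m n"
    (is "?L = ?A \<union> ?B")
proof
  show "?L \<subseteq> ?A \<union> ?B"
  proof
    fix p assume "p \<in> ?L"
    then obtain k j where p: "p = (Suc k, j)" and k: "m \<le> k" "k \<le> n"
      and j: "1 \<le> j" "j \<le> 2 ^ k"
      unfolding dyadic_index_def by (cases p, case_tac "fst p") auto
    show "p \<in> ?A \<union> ?B"
    proof (cases "j \<le> 2 ^ (k - 1)")
      case True
      then have "(k, j) \<in> dyadic_index m n" using k j by (simp add: dyadic_index_def)
      then show ?thesis using p by force
    next
      case False
      have "(2::int) ^ k = 2 * 2 ^ (k - 1)" using k assms by (simp flip: power_Suc)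
      then have "(k, j - 2 ^ (k - 1)) \<in> dyadic_index m n"
        using k j False by (simp add: dyadic_index_def)
      moreover have "p = (\<lambda>(k, j). (Suc k, j + 2 ^ (k - 1))) (k, j - 2 ^ (k - 1))" using p by simp
      ultimately show ?thesis by blast
    qed
  qed
next
  have "(2::int) ^ k = 2 * 2 ^ (k - 1)" if "m \<le> k" for k
    using that assms by (simp flip: power_Suc)
  then show "?A \<union> ?B \<subseteq> ?L" by (auto simp: dyadic_index_def)
qed

lemma sum_dyadic_index_Suc:
  assumes "1 \<le> m"
  shows "(\<Sum>p\<in>dyadic_index (Suc m) (Suc n). f p) =
    (\<Sum>(k, j)\<in>dyadic_index m n. f (Suc k, j)) +
    (\<Sum>(k, j)\<in>dyadic_index m n. f (Suc k, j + 2 ^ (k - 1)))"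
proof -
  have "inj_on (\<lambda>(k, j). (Suc k, j)) (dyadic_index m n)"
    and "inj_on (\<lambda>(k, j). (Suc k, j + 2 ^ (k - 1))) (dyadic_index m n)"
    and "(\<lambda>(k, j). (Suc k, j)) ` dyadic_index m n \<inter>
         (\<lambda>(k, j). (Suc k, j + 2 ^ (k - 1))) ` dyadic_index m n = {}"
    by (auto simp: inj_on_def dyadic_index_def)
  then show ?thesis
    by (simp add: dyadic_index_Suc_eq[OF assms] sum.union_disjoint sum.reindex case_prod_unfold)
qed

definition haar_series ::
  "(nat \<times> int) set \<Rightarrow> (nat \<times> int \<Rightarrow> 'b::real_normed_vector) \<Rightarrow> real \<Rightarrow> 'b"
  where "haar_series F v t = (\<Sum>(k, j)\<in>F. haar k j t *\<^sub>R v (k, j))"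

lemma haar_series_eq_0: "t \<notin> {0..<1} \<Longrightarrow> haar_series F v t = 0"
  by (simp add: haar_series_def haar_def del: atLeastLessThan_iff)

lemma haar_series_dyadic_index_Suc:
  assumes "1 \<le> m"
  shows "haar_series (dyadic_index (Suc m) (Suc n)) v t =
    sqrt 2 *\<^sub>R (haar_series (dyadic_index m n) (\<lambda>(k, j). v (Suc k, j)) (2 * t) +
                haar_series (dyadic_index m n) (\<lambda>(k, j). v (Suc k, j + 2 ^ (k - 1))) (2 * t - 1))"
proof -
  have "haar (Suc k) j t = sqrt 2 * haar k j (2 * t)"
    and "haar (Suc k) (j + 2 ^ (k - 1)) t = sqrt 2 * haar k j (2 * t - 1)"
    if "(k, j) \<in> dyadic_index m n" for k j
  proof -
    have "1 \<le> k" "1 \<le> j" "j \<le> 2 ^ (k - 1)" using that assms by (auto simp: dyadic_index_def)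
    then show "haar (Suc k) j t = sqrt 2 * haar k j (2 * t)"
      and "haar (Suc k) (j + 2 ^ (k - 1)) t = sqrt 2 * haar k j (2 * t - 1)"
      by (simp_all only: haar_Suc_left haar_Suc_right)
  qed
  then show ?thesis
    unfolding haar_series_def sum_dyadic_index_Suc[OF assms] scaleR_add_right scaleR_sum_right
    by (auto intro!: sum.cong arg_cong2[where f = "(+)"])
qed

lemma L2_norm01_nonneg: "0 \<le> L2_norm01 f"
  by (simp add: L2_norm01_def set_lebesgue_integral_def)

lemma L2_norm01_eq_integral:
  assumes "\<And>t. t \<notin> {0..<1} \<Longrightarrow> f t = 0"
  shows "L2_norm01 f = sqrt (\<integral>t. (norm (f t))\<^sup>2 \<partial>lborel)"
proof -
  have "indicator {0..<1} t * (norm (f t))\<^sup>2 = (norm (f t))\<^sup>2" for t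
    by (cases "t \<in> {0..<1}") (simp_all add: assms del: atLeastLessThan_iff)
  then show ?thesis by (simp only: L2_norm01_def set_lebesgue_integral_def real_scaleR_def)
qed

lemma L2_norm01_le:
  assumes "\<And>t. t \<in> {0..<1} \<Longrightarrow> norm (f t) \<le> B"
  shows "L2_norm01 f \<le> B"
proof -
  have "0 \<le> B" using order_trans[OF norm_ge_zero assms[of 0]] by simp
  have "integrable lborel (\<lambda>t. indicator {0..<1::real} t * B\<^sup>2)"
    using integrable_real_mult_indicator[of "{0..<1}" lborel "\<lambda>_. B\<^sup>2"]
    by (simp add: mult.commute)
  then have "(LINT t : {0..<1} | lborel. (norm (f t))\<^sup>2)
      \<le> (\<integral>t. indicator {0..<1::real} t * B\<^sup>2 \<partial>lborel)"
    unfolding set_lebesgue_integral_def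
    by (rule integral_mono') (auto simp: indicator_def intro!: power_mono assms)
  also have "\<dots> = B\<^sup>2" by simp
  finally show ?thesis
    unfolding L2_norm01_def using \<open>0 \<le> B\<close> by (metis real_sqrt_le_mono real_sqrt_abs abs_of_nonneg)
qed

text \<open>Only an inequality: the Bochner integral of a non-integrable function is 0.\<close>

lemma L2_norm01_two_scale_le:
  fixes g h :: "real \<Rightarrow> 'b::real_normed_vector"
  assumes g: "\<And>s. s \<notin> {0..<1} \<Longrightarrow> g s = 0" and h: "\<And>s. s \<notin> {0..<1} \<Longrightarrow> h s = 0"
  shows "(L2_norm01 (\<lambda>t. sqrt 2 *\<^sub>R (g (2 * t) + h (2 * t - 1))))\<^sup>2
           \<le> (L2_norm01 g)\<^sup>2 + (L2_norm01 h)\<^sup>2"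
proof -
  define f where "f t = sqrt 2 *\<^sub>R (g (2 * t) + h (2 * t - 1))" for t
  define F G H where "F t = (norm (f t))\<^sup>2" and "G t = (norm (g t))\<^sup>2" and "H t = (norm (h t))\<^sup>2"
    for t
  have f_vanishes: "f t = 0" if "t \<notin> {0..<1}" for t
  proof -
    have "2 * t \<notin> {0..<1}" "2 * t - 1 \<notin> {0..<1}" using that by auto
    then show ?thesis by (simp add: f_def g[of "2 * t"] h[of "2 * t - 1"] del: atLeastLessThan_iff)
  qed
  have F_eq: "F t = 2 * G (2 * t) + 2 * H (2 * t - 1)"
    and F_left: "2 * G (2 * t) = F t * indicator {..<1/2} t" for t
  proof -
    have "h (2 * t - 1) = 0" if "t < 1/2" using that by (intro h) auto
    moreover have "g (2 * t) = 0" if "\<not> t < 1/2" using that by (intro g) auto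
    ultimately show "F t = 2 * G (2 * t) + 2 * H (2 * t - 1)"
      and "2 * G (2 * t) = F t * indicator {..<1/2} t"
      by (cases "t < 1/2"; simp add: F_def G_def H_def f_def power_mult_distrib)+
  qed
  have G_affine: "integral\<^sup>L lborel G = (\<integral>t. 2 * G (2 * t) \<partial>lborel)"
    using lborel_integral_real_affine[of 2 G 0] by simp
  have H_affine: "integral\<^sup>L lborel H = (\<integral>t. 2 * H (2 * t - 1) \<partial>lborel)"
    using lborel_integral_real_affine[of 2 H "-1"] by (simp add: algebra_simps)
  have "integral\<^sup>L lborel F \<le> integral\<^sup>L lborel G + integral\<^sup>L lborel H"
  proof (cases "integrable lborel F")
    case True
    have left: "integrable lborel (\<lambda>t. 2 * G (2 * t))"
      unfolding F_left by (rule integrable_real_mult_indicator[OF _ True]) simp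
    then have "integrable lborel (\<lambda>t. 2 * H (2 * t - 1))"
      using Bochner_Integration.integrable_diff[OF True left] by (simp add: F_eq)
    then show ?thesis
      using left by (simp add: F_eq[abs_def] G_affine H_affine)
  next
    case False
    then show ?thesis by (simp add: not_integrable_integral_eq G_def H_def)
  qed
  moreover have "(L2_norm01 f)\<^sup>2 = integral\<^sup>L lborel F"
    using L2_norm01_eq_integral[OF f_vanishes] by (simp add: F_def[abs_def])
  moreover have "(L2_norm01 g)\<^sup>2 = integral\<^sup>L lborel G" "(L2_norm01 h)\<^sup>2 = integral\<^sup>L lborel H"
    using L2_norm01_eq_integral[OF g] L2_norm01_eq_integral[OF h]
    by (simp_all add: G_def[abs_def] H_def[abs_def])
  ultimately show ?thesis by (simp add: f_def[abs_def])
qed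

definition haar_constants ::
  "('a::real_normed_vector \<Rightarrow> 'b::real_normed_vector) \<Rightarrow> (nat \<times> int) set \<Rightarrow> real set"
  where "haar_constants T F =
    {c. 0 \<le> c \<and> (\<forall>x. L2_norm01 (haar_series F (T \<circ> x)) \<le> c * L2_set (norm \<circ> x) F)}"

lemma haar_tau_eq_Inf: "haar_tau T F = Inf (haar_constants T F)"
  by (simp add: haar_tau_def haar_constants_def haar_series_def[abs_def] L2_set_def case_prod_unfold)

lemma haar_constants_dyadic_index_Suc:
  assumes "1 \<le> m"
  shows "haar_constants T (dyadic_index m n) \<subseteq> haar_constants T (dyadic_index (Suc m) (Suc n))"
proof
  let ?D = "dyadic_index m n" and ?D' = "dyadic_index (Suc m) (Suc n)"
  fix c assume "c \<in> haar_constants T ?D"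
  then have "0 \<le> c"
    and bound: "\<And>y. L2_norm01 (haar_series ?D (T \<circ> y)) \<le> c * L2_set (norm \<circ> y) ?D"
    by (simp_all add: haar_constants_def)
  have "L2_norm01 (haar_series ?D' (T \<circ> x)) \<le> c * L2_set (norm \<circ> x) ?D'" for x
  proof -
    define x1 x2 where "x1 = (\<lambda>(k, j). x (Suc k, j))"
      and "x2 = (\<lambda>(k, j). x (Suc k, j + 2 ^ (k - 1)))"
    have series: "haar_series ?D' (T \<circ> x) =
      (\<lambda>t. sqrt 2 *\<^sub>R (haar_series ?D (T \<circ> x1) (2 * t) + haar_series ?D (T \<circ> x2) (2 * t - 1)))"
      by (rule ext)
        (simp add: haar_series_dyadic_index_Suc[OF assms] x1_def x2_def case_prod_unfold comp_def)
    have energy: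
      "(L2_set (norm \<circ> x) ?D')\<^sup>2 = (L2_set (norm \<circ> x1) ?D)\<^sup>2 + (L2_set (norm \<circ> x2) ?D)\<^sup>2"
      by (simp add: L2_set_def sum_dyadic_index_Suc[OF assms] sum_nonneg x1_def x2_def case_prod_unfold)
    have "(L2_norm01 (haar_series ?D' (T \<circ> x)))\<^sup>2
        \<le> (L2_norm01 (haar_series ?D (T \<circ> x1)))\<^sup>2 + (L2_norm01 (haar_series ?D (T \<circ> x2)))\<^sup>2"
      unfolding series by (rule L2_norm01_two_scale_le) (simp_all add: haar_series_eq_0)
    also have "\<dots> \<le> (c * L2_set (norm \<circ> x1) ?D)\<^sup>2 + (c * L2_set (norm \<circ> x2) ?D)\<^sup>2"
      by (intro add_mono power_mono bound L2_norm01_nonneg)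
    also have "\<dots> = (c * L2_set (norm \<circ> x) ?D')\<^sup>2"
      by (simp add: energy power_mult_distrib distrib_left)
    finally show ?thesis
      by (rule power2_le_imp_le) (simp add: \<open>0 \<le> c\<close>)
  qed
  with \<open>0 \<le> c\<close> show "c \<in> haar_constants T ?D'"
    by (simp add: haar_constants_def)
qed

lemma haar_constants_nonempty:
  assumes "finite F" "bounded_linear T"
  shows "haar_constants T F \<noteq> {}"
proof -
  define c where "c = (\<Sum>(k, j)\<in>F. 2 powr ((real k - 1) / 2)) * onorm T"
  have "0 \<le> c"
    unfolding c_def using onorm_pos_le[OF assms(2)] by (simp add: case_prod_unfold sum_nonneg)
  moreover have "L2_norm01 (haar_series F (T \<circ> x)) \<le> c * L2_set (norm \<circ> x) F" for x
  proof (rule L2_norm01_le)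
    fix t
    have "norm (haar_series F (T \<circ> x) t) \<le> (\<Sum>(k, j)\<in>F. \<bar>haar k j t\<bar> * norm (T (x (k, j))))"
      unfolding haar_series_def case_prod_unfold by (rule sum_norm_le) simp
    also have "\<dots> \<le> (\<Sum>(k, j)\<in>F. 2 powr ((real k - 1) / 2) * (onorm T * L2_set (norm \<circ> x) F))"
    proof (rule sum_mono, clarify)
      fix k j assume "(k, j) \<in> F"
      then have "norm (x (k, j)) \<le> L2_set (norm \<circ> x) F"
        using member_le_L2_set[OF assms(1)] by (metis comp_apply)
      then have "norm (T (x (k, j))) \<le> onorm T * L2_set (norm \<circ> x) F"
        using onorm[OF assms(2)] onorm_pos_le[OF assms(2)] by (meson mult_left_mono order_trans)
      then show "\<bar>haar k j t\<bar> * norm (T (x (k, j)))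
          \<le> 2 powr ((real k - 1) / 2) * (onorm T * L2_set (norm \<circ> x) F)"
        by (intro mult_mono) (auto simp: haar_def)
    qed
    also have "\<dots> = c * L2_set (norm \<circ> x) F"
      by (simp only: c_def mult.assoc sum_distrib_right case_prod_unfold)
    finally show "norm (haar_series F (T \<circ> x) t) \<le> c * L2_set (norm \<circ> x) F" .
  qed
  ultimately have "c \<in> haar_constants T F"
    by (simp add: haar_constants_def)
  then show ?thesis by blast
qed

theorem proposition3p1:
  fixes T :: "'a::banach \<Rightarrow> 'b::banach" and m n :: nat
  assumes "1 \<le> m" and "m \<le> n" and "bounded_linear T"
  shows "haar_tau T (dyadic_index (m + 1) (n + 1)) \<le> haar_tau T (dyadic_index m n)"
  unfolding haar_tau_eq_Inf Suc_eq_plus1[symmetric]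
proof (rule cInf_superset_mono)
  show "haar_constants T (dyadic_index m n) \<noteq> {}"
    using assms(3) by (simp add: haar_constants_nonempty)
  show "bdd_below (haar_constants T (dyadic_index (Suc m) (Suc n)))"
    by (rule bdd_belowI[where m = 0]) (simp add: haar_constants_def)
  show "haar_constants T (dyadic_index m n) \<subseteq> haar_constants T (dyadic_index (Suc m) (Suc n))"
    using assms(1) by (rule haar_constants_dyadic_index_Suc)
qed

end
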